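(* Every quadrangle of $Q$ is a face of exactly $(q-1)^2(q+1)$ centric cubes of $Q$.
   Context: Let $q=2^n$, $V=V(6,q)$, and let $Q=Q^-(5,q)$ be the set of singular points of a non-degenerate quadratic form $f$ of Witt index $2$ on $V$, viewed as a generalized quadrangle of order $(q,q^2)$ with the totally singular lines as lines; $\perp$ is orthogonality with respect to the bilinear form of $f$, and two distinct points of $Q$ are collinear iff orthogonal. A quadrangle of $Q$ is a set of four distinct points $a,b,c,d$ of $Q$ with $a\perp b\perp c\perp d\perp a$, $a\not\perp c$, $b\not\perp d$. For a point $p\notin Q$, a centric cube of $Q$ with center $p$ is a set of eight points $\{x_i^a: i=1,\dots,4,\ a=1,2\}$ of $Q\setminus p^\perp$ such that $x_i^a$ and $x_j^b$ are collinear in $Q$ iff $i\neq j$ and $a\neq b$, and such that for each $i$ the points $p,x_i^1,x_i^2$ are on a common projective line. A centric cube of $Q$ is a centric cube with some center $p\notin Q$. A face of such a cube is a set of four of its points, one from each pair $\{x_i^1,x_i^2\}$, whose induced collinearity graph is a $4$-cycle. *)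

theory Defs
  imports "HOL-Analysis.Analysis"
begin

definition quadratic_form :: "('a::field^6 \<Rightarrow> 'a) \<Rightarrow> bool" where
  "quadratic_form f \<longleftrightarrow> (\<exists>A :: 6 \<Rightarrow> 6 \<Rightarrow> 'a. \<forall>x. f x = (\<Sum>i\<in>UNIV. \<Sum>j\<in>UNIV. A i j * x$i * x$j))"

definition polar :: "('a::field^6 \<Rightarrow> 'a) \<Rightarrow> 'a^6 \<Rightarrow> 'a^6 \<Rightarrow> 'a" where
  "polar f u v = f (u + v) - f u - f v"

definition nondegenerate :: "('a::field^6 \<Rightarrow> 'a) \<Rightarrow> bool" where
  "nondegenerate f \<longleftrightarrow> (\<forall>v. v \<noteq> 0 \<longrightarrow> (\<exists>w. polar f v w \<noteq> 0))"

definition totally_singular :: "('a::field^6 \<Rightarrow> 'a) \<Rightarrow> ('a^6) set \<Rightarrow> bool" where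
  "totally_singular f S \<longleftrightarrow> vec.subspace S \<and> (\<forall>v\<in>S. f v = 0)"

definition witt_index :: "('a::field^6 \<Rightarrow> 'a) \<Rightarrow> nat \<Rightarrow> bool" where
  "witt_index f k \<longleftrightarrow> (\<exists>S. totally_singular f S \<and> vec.dim S = k)
       \<and> (\<forall>S. totally_singular f S \<longrightarrow> vec.dim S \<le> k)"

definition proj_points :: "('a::field^6) set set" where
  "proj_points = {P. vec.subspace P \<and> vec.dim P = 1}"

definition Qpts :: "('a::field^6 \<Rightarrow> 'a) \<Rightarrow> ('a^6) set set" where
  "Qpts f = {P \<in> proj_points. \<forall>v\<in>P. f v = 0}"

definition perp :: "('a::field^6 \<Rightarrow> 'a) \<Rightarrow> ('a^6) set \<Rightarrow> ('a^6) set \<Rightarrow> bool" where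
  "perp f P R \<longleftrightarrow> (\<forall>u\<in>P. \<forall>w\<in>R. polar f u w = 0)"

definition collinearQ :: "('a::field^6 \<Rightarrow> 'a) \<Rightarrow> ('a^6) set \<Rightarrow> ('a^6) set \<Rightarrow> bool" where
  "collinearQ f P R \<longleftrightarrow> P \<in> Qpts f \<and> R \<in> Qpts f \<and> P \<noteq> R \<and> perp f P R"

definition on_common_line :: "('a::field^6) set \<Rightarrow> ('a^6) set \<Rightarrow> ('a^6) set \<Rightarrow> bool" where
  "on_common_line P R S \<longleftrightarrow>
     (\<exists>L. vec.subspace L \<and> vec.dim L = 2 \<and> P \<subseteq> L \<and> R \<subseteq> L \<and> S \<subseteq> L)"

definition is_quadrangle :: "('a::field^6 \<Rightarrow> 'a) \<Rightarrow> ('a^6) set \<Rightarrow> ('a^6) set \<Rightarrow> ('a^6) set \<Rightarrow> ('a^6) set \<Rightarrow> bool" where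
  "is_quadrangle f a b c d \<longleftrightarrow>
     a \<in> Qpts f \<and> b \<in> Qpts f \<and> c \<in> Qpts f \<and> d \<in> Qpts f \<and> distinct [a, b, c, d] \<and>
     perp f a b \<and> perp f b c \<and> perp f c d \<and> perp f d a \<and> \<not> perp f a c \<and> \<not> perp f b d"

definition quadrangle_set :: "('a::field^6 \<Rightarrow> 'a) \<Rightarrow> ('a^6) set set \<Rightarrow> bool" where
  "quadrangle_set f F \<longleftrightarrow> (\<exists>a b c d. F = {a, b, c, d} \<and> is_quadrangle f a b c d)"

definition centric_cube_wrt :: "('a::field^6 \<Rightarrow> 'a) \<Rightarrow> ('a^6) set \<Rightarrow> (nat \<Rightarrow> nat \<Rightarrow> ('a^6) set) \<Rightarrow> bool" where
  "centric_cube_wrt f p x \<longleftrightarrow>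
     p \<in> proj_points \<and> p \<notin> Qpts f \<and>
     inj_on (\<lambda>(i, a). x i a) ({1..4} \<times> {1..2}) \<and>
     (\<forall>i\<in>{1..4}. \<forall>a\<in>{1..2}. x i a \<in> Qpts f \<and> \<not> perp f p (x i a)) \<and>
     (\<forall>i\<in>{1..4}. \<forall>a\<in>{1..2}. \<forall>j\<in>{1..4}. \<forall>b\<in>{1..2}. (i, a) \<noteq> (j, b) \<longrightarrow>
        (collinearQ f (x i a) (x j b) \<longleftrightarrow> i \<noteq> j \<and> a \<noteq> b)) \<and>
     (\<forall>i\<in>{1..4}. on_common_line p (x i 1) (x i 2))"

definition cube_points :: "(nat \<Rightarrow> nat \<Rightarrow> ('a^6) set) \<Rightarrow> ('a^6) set set" where
  "cube_points x = (\<lambda>(i, a). x i a) ` ({1..4} \<times> {1..2})"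

definition centric_cube :: "('a::field^6 \<Rightarrow> 'a) \<Rightarrow> ('a^6) set set \<Rightarrow> bool" where
  "centric_cube f C \<longleftrightarrow> (\<exists>p x. centric_cube_wrt f p x \<and> C = cube_points x)"

definition face_of_cube :: "('a::field^6 \<Rightarrow> 'a) \<Rightarrow> ('a^6) set set \<Rightarrow> ('a^6) set set \<Rightarrow> bool" where
  "face_of_cube f F C \<longleftrightarrow> (\<exists>p x. centric_cube_wrt f p x \<and> C = cube_points x \<and>
     (\<exists>s. (\<forall>i\<in>{1..4}. s i \<in> {1..2}) \<and> F = (\<lambda>i. x i (s i)) ` {1..4} \<and> quadrangle_set f F))"

end

theory Submission
  imports Defs "HOL-Number_Theory.Residues"
begin

text \<open>
  In characteristic 2, for a non-singular vector \<open>p\<close> the map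
  \<open>u \<mapsto> u + (B u p / f p) p\<close> is an isometry of the quadric, and the line through \<open>p\<close> and a
  singular point \<open>u\<close> meets the quadric again exactly in the image of \<open>u\<close>. So a centric cube with
  centre \<open>p\<close> consists of the four points of a face and their images, and all its collinearities
  are polar values that can be computed. Normalise the quadrangle to vectors \<open>a, b, c, d\<close> with
  \<open>B a c = B b d = 1\<close> and the centre by \<open>B a p = 1\<close>: the cubes with face \<open>{a, b, c, d}\<close>
  then correspond bijectively to the vectors \<open>p\<close> with \<open>B b p, B c p, B d p \<noteq> 0\<close> and
  \<open>f p = B c p = B b p * B d p\<close>. These are \<open>p = \<alpha> a + \<beta> b + c + (\<alpha> / \<beta>) d + w\<close> with
  \<open>\<alpha>, \<beta> \<noteq> 0\<close> and \<open>w\<close> in the plane \<open>W = \<langle>a, b, c, d\<rangle>\<^sup>\<perp>\<close> with \<open>f w = \<alpha>\<close>. By the Witt index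
  \<open>W\<close> is anisotropic, so \<open>f\<close> takes each nonzero value on exactly \<open>q + 1\<close> vectors of \<open>W\<close>, which
  gives \<open>(q - 1)\<^sup>2 (q + 1)\<close> cubes.
\<close>

lemma two_eq_zero_if_card_eq_power_of_two:
  assumes "CARD('a::{finite,field}) = 2 ^ n"
  shows "(2::'a) = 0"
proof -
  have dvd: "CHAR('a) dvd 2 ^ n"
    using CHAR_dvd_CARD[where 'a='a] assms by simp
  have "CHAR('a) \<noteq> 0"
    using CHAR_dvd_CARD[where 'a='a] by (intro notI) simp
  then have "prime CHAR('a)"
    using prime_CHAR_semidom by auto
  with dvd have "CHAR('a) = 2"
    by (metis prime_dvd_power prime_nat_iff two_is_prime_nat not_prime_1)
  then show ?thesis
    using of_nat_CHAR[where 'a='a] by simp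
qed

locale char2_quadratic_form =
  fixes f :: "'a::field^6 \<Rightarrow> 'a"
  assumes quadratic: "quadratic_form f" and two_eq_zero: "(2::'a) = 0"
begin

abbreviation B where "B \<equiv> polar f"

lemma add_self_eq_0 [simp]: "(x::'a) + x = 0"
  using two_eq_zero by (metis mult_2 mult_zero_left)

lemma add_eq_0_iff_eq: "(x::'a) + y = 0 \<longleftrightarrow> x = y"
  by (metis add_self_eq_0 add_left_cancel)

lemma polar_eq_sum:
  obtains A where "\<And>u v. B u v = (\<Sum>i\<in>UNIV. \<Sum>j\<in>UNIV. A i j * (u $ i * v $ j + v $ i * u $ j))"
    and "\<And>u. f u = (\<Sum>i\<in>UNIV. \<Sum>j\<in>UNIV. A i j * u $ i * u $ j)"
proof -
  obtain A where fA: "\<And>u. f u = (\<Sum>i\<in>UNIV. \<Sum>j\<in>UNIV. A i j * u $ i * u $ j)"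
    using quadratic unfolding quadratic_form_def by blast
  have "B u v = (\<Sum>i\<in>UNIV. \<Sum>j\<in>UNIV. A i j * (u $ i * v $ j + v $ i * u $ j))" for u v
    unfolding polar_def fA sum_subtractf[symmetric]
    by (intro sum.cong refl) (simp add: algebra_simps)
  then show thesis
    using fA by (rule that)
qed

lemma polar_add_left: "B (u + w) v = B u v + B w v"
  by (rule polar_eq_sum, simp only: sum.distrib[symmetric]) (intro sum.cong refl, simp add: algebra_simps)

lemma polar_scale_left: "B (t *s u) v = t * B u v"
  by (rule polar_eq_sum, simp only: sum_distrib_left) (intro sum.cong refl, simp add: algebra_simps)

lemma f_scale: "f (t *s u) = t * t * f u"
  by (rule polar_eq_sum, simp only: sum_distrib_left) (intro sum.cong refl, simp add: algebra_simps)

lemma polar_commute: "B u v = B v u"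
  by (simp add: polar_def add.commute)

lemma polar_add_right: "B v (u + w) = B v u + B v w"
  by (simp add: polar_commute[of v] polar_add_left)

lemma polar_scale_right: "B v (t *s u) = t * B v u"
  by (simp add: polar_commute[of v] polar_scale_left)

lemma polar_diff_left: "B (u - w) v = B u v - B w v"
  using polar_add_left[of "u - w" w v] by simp

lemma f_add: "f (u + v) = f u + f v + B u v"
  by (simp add: polar_def)

lemma f_zero [simp]: "f 0 = 0"
  using f_scale[of 0 0] by simp

lemma polar_zero_left [simp]: "B 0 v = 0"
  using polar_scale_left[of 0 0 v] by simp

lemma polar_zero_right [simp]: "B v 0 = 0"
  using polar_zero_left polar_commute by metis

lemma polar_self [simp]: "B u u = 0"
proof -
  have "u + u = (2::'a) *s u"
    by (simp only: vec_eq_iff vector_add_component vector_smult_component mult_2 simp_thms)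
  then show ?thesis
    by (simp add: polar_def f_scale two_eq_zero)
qed

lemmas polar_linear = polar_add_left polar_add_right polar_scale_left polar_scale_right

end

definition proj_pt :: "'a::field^6 \<Rightarrow> ('a^6) set" where
  "proj_pt v = vec.span {v}"

lemma mem_proj_pt_iff: "x \<in> proj_pt v \<longleftrightarrow> (\<exists>t. x = t *s v)"
  unfolding proj_pt_def vec.span_singleton by auto

lemma mem_proj_pt_self: "v \<in> proj_pt v"
  using mem_proj_pt_iff[of v v] by (metis vector_smult_lid)

lemma proj_pt_eq_imp_scale: "proj_pt u = proj_pt v \<Longrightarrow> \<exists>r. u = r *s v"
  using mem_proj_pt_self[of u] mem_proj_pt_iff by blast

lemma proj_pt_scale: "(t::'a::field) \<noteq> 0 \<Longrightarrow> proj_pt (t *s v) = proj_pt v"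
proof -
  assume t: "t \<noteq> 0"
  have "(\<exists>s. x = s *s (t *s v)) \<longleftrightarrow> (\<exists>s. x = s *s v)" for x
  proof
    show "\<exists>s. x = s *s (t *s v) \<Longrightarrow> \<exists>s. x = s *s v"
      by auto
    assume "\<exists>s. x = s *s v"
    then obtain s where "x = s *s v" ..
    with t have "x = (s / t) *s (t *s v)"
      by simp
    then show "\<exists>s. x = s *s (t *s v)" ..
  qed
  then show ?thesis
    unfolding set_eq_iff mem_proj_pt_iff by blast
qed

lemma proj_points_iff: "P \<in> proj_points \<longleftrightarrow> (\<exists>v. v \<noteq> 0 \<and> P = proj_pt (v::'a::field^6))"
proof
  assume "P \<in> proj_points"
  then have sP: "vec.subspace P" and dP: "vec.dim P = 1"
    unfolding proj_points_def by auto
  obtain Bs where Bs: "Bs \<subseteq> P" "vec.independent Bs" "P \<subseteq> vec.span Bs" "card Bs = vec.dim P"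
    using vec.basis_exists by blast
  then obtain v where v: "Bs = {v}"
    using dP card_1_singletonE by metis
  have "P = proj_pt v"
    unfolding proj_pt_def using Bs v vec.span_minimal[OF _ sP, of "{v}"] by auto
  with Bs(2) v show "\<exists>v. v \<noteq> 0 \<and> P = proj_pt v" by auto
next
  assume "\<exists>v. v \<noteq> 0 \<and> P = proj_pt v"
  then obtain v where v: "v \<noteq> 0" "P = proj_pt v" by blast
  have "vec.dim (vec.span {v}) = card {v}"
    by (rule vec.dim_span_eq_card_independent) (simp add: v)
  then show "P \<in> proj_points"
    unfolding proj_points_def proj_pt_def v(2) by simp
qed

lemma proj_pt_in_proj_points_iff: "proj_pt v \<in> proj_points \<longleftrightarrow> v \<noteq> (0::'a::field^6)"
proof
  assume "proj_pt v \<in> proj_points"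
  then obtain w where "w \<noteq> 0" "proj_pt v = proj_pt w"
    unfolding proj_points_iff by blast
  then show "v \<noteq> 0"
    using proj_pt_eq_imp_scale[of w v] by auto
qed (auto simp: proj_points_iff)

lemma centric_cube_wrtD:
  assumes "centric_cube_wrt f P x"
  shows "P \<in> proj_points" "P \<notin> Qpts f" "inj_on (\<lambda>(i, a). x i a) ({1..4} \<times> {1..2})"
    and "\<And>i a. i \<in> {1..4} \<Longrightarrow> a \<in> {1..2} \<Longrightarrow> x i a \<in> Qpts f"
    and "\<And>i a. i \<in> {1..4} \<Longrightarrow> a \<in> {1..2} \<Longrightarrow> \<not> perp f P (x i a)"
    and "\<And>i a j b. i \<in> {1..4} \<Longrightarrow> a \<in> {1..2} \<Longrightarrow> j \<in> {1..4} \<Longrightarrow> b \<in> {1..2} \<Longrightarrow>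
      (i, a) \<noteq> (j, b) \<Longrightarrow> collinearQ f (x i a) (x j b) \<longleftrightarrow> i \<noteq> j \<and> a \<noteq> b"
    and "\<And>i. i \<in> {1..4} \<Longrightarrow> on_common_line P (x i 1) (x i 2)"
  using assms unfolding centric_cube_wrt_def by blast+

text \<open>Side on which the \<open>i\<close>-th vertex of a face sits in the \<open>i\<close>-th pair of a cube; the sides
  alternate because consecutive vertices of the face are collinear.\<close>
definition face_side :: "nat \<Rightarrow> nat" where
  "face_side i = (if odd i then 1 else 2)"

lemma face_side_mem: "face_side i \<in> {1..2}" "3 - face_side i \<in> {1..2}" "3 - face_side i \<noteq> face_side i"
  by (simp_all add: face_side_def)

lemma other_side_mem:
  assumes "a \<in> {1..2::nat}"
  shows "3 - a \<in> {1..2}" "3 - a \<noteq> a"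
proof -
  have "a = 1 \<or> a = 2"
    using assms by auto
  then show "3 - a \<in> {1..2}" "3 - a \<noteq> a"
    by auto
qed

text \<open>Against the four points \<open>(k, face_side k)\<close> of a face, the collinearity pattern of the cube
  tells all eight points apart.\<close>
lemma cube_index_eq_of_face_pattern:
  fixes i a j b :: nat
  assumes "i \<in> {1..4}" "a \<in> {1..2}" "j \<in> {1..4}" "b \<in> {1..2}"
    and pattern: "\<And>k. k \<in> {1..4} \<Longrightarrow>
      ((i = k \<and> a = face_side k) \<or> (i \<noteq> k \<and> a \<noteq> face_side k)) \<longleftrightarrow>
      ((j = k \<and> b = face_side k) \<or> (j \<noteq> k \<and> b \<noteq> face_side k))"
  shows "(i, a) = (j, b)"
proof -
  have "i = 1 \<or> i = 2 \<or> i = 3 \<or> i = 4" "j = 1 \<or> j = 2 \<or> j = 3 \<or> j = 4" "a = 1 \<or> a = 2" "b = 1 \<or> b = 2"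
    using assms(1-4) by auto
  then show ?thesis
    using pattern[of 1] pattern[of 2] pattern[of 3] pattern[of 4]
    by (elim disjE) (simp_all add: face_side_def)
qed

context char2_quadratic_form
begin

lemma Qpts_proj_pt_iff: "proj_pt v \<in> Qpts f \<longleftrightarrow> v \<noteq> 0 \<and> f v = 0"
proof -
  have "proj_pt v \<in> Qpts f \<longleftrightarrow> v \<noteq> 0 \<and> (\<forall>x\<in>proj_pt v. f x = 0)"
    by (simp add: Qpts_def proj_pt_in_proj_points_iff)
  also have "\<dots> \<longleftrightarrow> v \<noteq> 0 \<and> (\<forall>t. f (t *s v) = 0)"
    by (auto simp: mem_proj_pt_iff)
  also have "\<dots> \<longleftrightarrow> v \<noteq> 0 \<and> f v = 0"
    using spec[of "\<lambda>t. f (t *s v) = 0" 1] by (auto simp: f_scale)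
  finally show ?thesis .
qed

lemma QptsE:
  assumes "X \<in> Qpts f"
  obtains v where "v \<noteq> 0" "f v = 0" "X = proj_pt v"
proof -
  from assms obtain v where "v \<noteq> 0" "X = proj_pt v"
    unfolding Qpts_def proj_points_iff by blast
  with assms show thesis
    using Qpts_proj_pt_iff that by blast
qed

lemma perp_proj_pt_iff: "perp f (proj_pt u) (proj_pt v) \<longleftrightarrow> B u v = 0"
proof
  show "perp f (proj_pt u) (proj_pt v) \<Longrightarrow> B u v = 0"
    unfolding perp_def using mem_proj_pt_self by blast
  assume uv: "B u v = 0"
  show "perp f (proj_pt u) (proj_pt v)"
  proof (unfold perp_def, intro ballI)
    fix x y assume "x \<in> proj_pt u" "y \<in> proj_pt v"
    then obtain s t where "x = s *s u" "y = t *s v"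
      by (auto simp: mem_proj_pt_iff)
    with uv show "B x y = 0"
      by (simp add: polar_scale_left polar_scale_right)
  qed
qed

lemma collinearQ_proj_pt_iff:
  "collinearQ f (proj_pt u) (proj_pt v) \<longleftrightarrow>
     u \<noteq> 0 \<and> v \<noteq> 0 \<and> f u = 0 \<and> f v = 0 \<and> proj_pt u \<noteq> proj_pt v \<and> B u v = 0"
  unfolding collinearQ_def Qpts_proj_pt_iff perp_proj_pt_iff by blast

lemma polar_eq_0_iff_of_proj_pt_eq:
  assumes "proj_pt u = proj_pt v"
  shows "B u z = 0 \<longleftrightarrow> B v z = 0"
proof -
  obtain r where r: "u = r *s v"
    using proj_pt_eq_imp_scale[OF assms] ..
  obtain s where s: "v = s *s u"
    using proj_pt_eq_imp_scale[OF assms[symmetric]] ..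
  have "B u z = r * B v z"
    unfolding r by (rule polar_scale_left)
  moreover have "B v z = s * B u z"
    unfolding s by (rule polar_scale_left)
  ultimately show ?thesis
    by (metis mult_zero_right)
qed

lemma proj_pt_neq_of_polar: "B u z = 0 \<Longrightarrow> B v z \<noteq> 0 \<Longrightarrow> proj_pt u \<noteq> proj_pt v"
  using polar_eq_0_iff_of_proj_pt_eq by blast

definition reflection :: "'a^6 \<Rightarrow> 'a^6 \<Rightarrow> 'a^6" where
  "reflection p u = u + (B u p / f p) *s p"

lemma polar_reflection_left: "B (reflection p u) v = B u v + B u p * B v p / f p"
  unfolding reflection_def by (simp add: polar_linear polar_commute[of p v])

lemma polar_reflection_right: "B v (reflection p u) = B v u + B u p * B v p / f p"
  unfolding reflection_def by (simp add: polar_linear)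

lemma polar_reflection_center: "B (reflection p u) p = B u p"
  by (simp add: polar_reflection_left)

lemma polar_reflection_reflection: "B (reflection p u) (reflection p w) = B u w"
  by (simp add: polar_reflection_left polar_reflection_right polar_reflection_center
      polar_commute[of p w] add.assoc add_eq_0_iff_eq mult.commute)

lemma f_reflection:
  assumes "f p \<noteq> 0"
  shows "f (reflection p u) = f u"
proof -
  let ?k = "B u p / f p"
  have "?k * ?k * f p = ?k * B u p"
    using assms by simp
  then show ?thesis
    by (simp add: reflection_def f_add f_scale polar_scale_right two_eq_zero)
qed

lemma reflection_nonzero: "B u p \<noteq> 0 \<Longrightarrow> reflection p u \<noteq> 0"
  using polar_reflection_center[of p u] by auto

lemma reflection_in_span: "reflection p u \<in> vec.span {u, p}"
  unfolding reflection_def by (intro vec.span_add vec.span_scale vec.span_base) auto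

lemma independent_singular_nonsingular:
  assumes "f p \<noteq> 0" "f u = 0" "u \<noteq> 0"
  shows "vec.independent {u, p}"
proof -
  have "u \<notin> vec.span {p}"
  proof
    assume "u \<in> vec.span {p}"
    then obtain t where t: "u = t *s p"
      unfolding vec.span_singleton by auto
    with assms have "t = 0"
      by (simp add: f_scale)
    with t assms(3) show False by simp
  qed
  moreover have "p \<noteq> 0"
    using assms(1) by auto
  ultimately show ?thesis
    by (simp add: vec.independent_insert)
qed

lemma on_common_line_reflection:
  assumes "f p \<noteq> 0" "f u = 0" "u \<noteq> 0"
  shows "on_common_line (proj_pt p) (proj_pt u) (proj_pt (reflection p u))"
    and "on_common_line (proj_pt p) (proj_pt (reflection p u)) (proj_pt u)"
proof -
  let ?L = "vec.span {u, p}"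
  have "u \<noteq> p"
    using assms by auto
  then have "vec.dim ?L = 2"
    using vec.dim_span_eq_card_independent[OF independent_singular_nonsingular[OF assms]] by simp
  moreover have "proj_pt v \<subseteq> ?L" if "v \<in> ?L" for v
    using that unfolding proj_pt_def by (simp add: vec.span_minimal)
  then have "proj_pt p \<subseteq> ?L" "proj_pt u \<subseteq> ?L" "proj_pt (reflection p u) \<subseteq> ?L"
    using reflection_in_span by (simp_all add: vec.span_base)
  ultimately show "on_common_line (proj_pt p) (proj_pt u) (proj_pt (reflection p u))"
    and "on_common_line (proj_pt p) (proj_pt (reflection p u)) (proj_pt u)"
    unfolding on_common_line_def by (meson vec.subspace_span)+
qed

lemma singular_point_on_line_eq_reflection:
  assumes L: "vec.subspace L" "vec.dim L = 2"
    and sub: "proj_pt p \<subseteq> L" "proj_pt u \<subseteq> L" "proj_pt v \<subseteq> L"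
    and fp: "f p \<noteq> 0" and u: "f u = 0" "u \<noteq> 0" and v: "f v = 0" "v \<noteq> 0"
    and ne: "proj_pt v \<noteq> proj_pt u" and up: "B u p \<noteq> 0"
  shows "proj_pt v = proj_pt (reflection p u)"
proof -
  have ind: "vec.independent {u, p}" and "u \<noteq> p"
    using independent_singular_nonsingular[OF fp u] fp u by auto
  moreover have "{u, p} \<subseteq> L"
    using sub mem_proj_pt_self by blast
  moreover have "vec.dim L \<le> card {u, p}"
    using L(2) \<open>u \<noteq> p\<close> by simp
  ultimately have "L \<subseteq> vec.span {u, p}"
    using vec.card_ge_dim_independent by blast
  then have "v \<in> vec.span {u, p}"
    using sub mem_proj_pt_self by blast
  then obtain k where "v - k *s u \<in> vec.span {p}"
    using vec.span_breakdown_eq by blast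
  then obtain t where "v - k *s u = t *s p"
    unfolding vec.span_singleton by auto
  then have vk: "v = k *s u + t *s p"
    by (simp add: algebra_simps)
  have "f v = t * (t * f p + k * B u p)"
    unfolding vk using u by (simp add: f_add f_scale polar_linear algebra_simps)
  moreover have "t \<noteq> 0"
  proof
    assume "t = 0"
    with vk v(2) have "k \<noteq> 0" "v = k *s u" by auto
    with ne show False by (simp add: proj_pt_scale)
  qed
  ultimately have tk: "t * f p = k * B u p"
    using v(1) by (simp add: add_eq_0_iff_eq)
  with \<open>t \<noteq> 0\<close> fp have "k \<noteq> 0" by auto
  moreover have "t = k * B u p / f p"
    using tk fp by (simp add: field_simps)
  then have "v = k *s reflection p u"
    unfolding vk reflection_def by (simp add: vector_add_ldistrib)
  ultimately show ?thesis
    by (simp add: proj_pt_scale)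
qed

lemma cube_polar_proj_pt_eq_imp_eq:
  fixes y :: "nat \<Rightarrow> nat \<Rightarrow> 'a^6"
  assumes gram: "\<And>i a j b. i \<in> {1..4} \<Longrightarrow> a \<in> {1..2} \<Longrightarrow> j \<in> {1..4} \<Longrightarrow> b \<in> {1..2} \<Longrightarrow>
      B (y i a) (y j b) = 0 \<longleftrightarrow> (i = j \<and> a = b) \<or> (i \<noteq> j \<and> a \<noteq> b)"
    and i: "i \<in> {1..4}" and a: "a \<in> {1..2}" and j: "j \<in> {1..4}" and b: "b \<in> {1..2}"
    and eq: "proj_pt (y i a) = proj_pt (y j b)"
  shows "(i, a) = (j, b)"
proof (rule ccontr)
  assume ne: "(i, a) \<noteq> (j, b)"
  have same: "B (y i a) z = 0 \<longleftrightarrow> B (y j b) z = 0" for z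
    using polar_eq_0_iff_of_proj_pt_eq[OF eq] .
  show False
  proof (cases "i \<noteq> j \<and> a \<noteq> b")
    case True
    have "\<exists>k::nat. 1 \<le> k \<and> k \<le> 4 \<and> k \<noteq> i \<and> k \<noteq> j"
      by presburger
    then obtain k where k: "k \<in> {1..4}" "k \<noteq> i" "k \<noteq> j"
      by auto
    have "B (y i a) (y k b) = 0"
      using gram[OF i a k(1) b] True k by auto
    moreover have "B (y j b) (y k b) \<noteq> 0"
      using gram[OF j b k(1) b] k by auto
    ultimately show False
      using same by blast
  next
    case False
    have "B (y j b) (y i a) \<noteq> 0"
      using gram[OF j b i a] ne False by auto
    then show False
      using same[of "y i a"] by simp
  qed
qed

lemma centric_cube_wrt_of_vectors:
  fixes y :: "nat \<Rightarrow> nat \<Rightarrow> 'a^6"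
  assumes fp: "f p \<noteq> 0"
    and sing: "\<And>i a. i \<in> {1..4} \<Longrightarrow> a \<in> {1..2} \<Longrightarrow> y i a \<noteq> 0 \<and> f (y i a) = 0 \<and> B (y i a) p \<noteq> 0"
    and gram: "\<And>i a j b. i \<in> {1..4} \<Longrightarrow> a \<in> {1..2} \<Longrightarrow> j \<in> {1..4} \<Longrightarrow> b \<in> {1..2} \<Longrightarrow>
      B (y i a) (y j b) = 0 \<longleftrightarrow> (i = j \<and> a = b) \<or> (i \<noteq> j \<and> a \<noteq> b)"
    and pairs: "\<And>i. i \<in> {1..4} \<Longrightarrow> y i 2 = reflection p (y i 1) \<or> y i 1 = reflection p (y i 2)"
  shows "centric_cube_wrt f (proj_pt p) (\<lambda>i a. proj_pt (y i a))"
proof -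
  have "p \<noteq> 0"
    using fp by auto
  then have center: "proj_pt p \<in> proj_points" "proj_pt p \<notin> Qpts f"
    using fp by (simp_all add: proj_pt_in_proj_points_iff Qpts_proj_pt_iff)
  have inj: "inj_on (\<lambda>(i, a). proj_pt (y i a)) ({1..4} \<times> {1..2})"
  proof (rule inj_onI)
    fix u v assume u: "u \<in> {1..4} \<times> {1..2}" and v: "v \<in> {1..4} \<times> {1..2}"
      and eq: "(\<lambda>(i, a). proj_pt (y i a)) u = (\<lambda>(i, a). proj_pt (y i a)) v"
    have "(fst u, snd u) = (fst v, snd v)"
      by (rule cube_polar_proj_pt_eq_imp_eq[OF gram])
        (use u v eq in \<open>auto simp: case_prod_beta mem_Times_iff\<close>)
    then show "u = v"
      by simp
  qed
  have points: "proj_pt (y i a) \<in> Qpts f \<and> \<not> perp f (proj_pt p) (proj_pt (y i a))"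
    if "i \<in> {1..4}" "a \<in> {1..2}" for i a
    using sing[OF that] by (simp add: Qpts_proj_pt_iff perp_proj_pt_iff polar_commute[of p])
  have collinear: "collinearQ f (proj_pt (y i a)) (proj_pt (y j b)) \<longleftrightarrow> i \<noteq> j \<and> a \<noteq> b"
    if "i \<in> {1..4}" "a \<in> {1..2}" "j \<in> {1..4}" "b \<in> {1..2}" "(i, a) \<noteq> (j, b)" for i a j b
  proof -
    have "proj_pt (y i a) \<noteq> proj_pt (y j b)"
      using cube_polar_proj_pt_eq_imp_eq[OF gram] that by blast
    then show ?thesis
      using sing[of i a] sing[of j b] gram[of i a j b] that by (auto simp: collinearQ_proj_pt_iff)
  qed
  have lines: "on_common_line (proj_pt p) (proj_pt (y i 1)) (proj_pt (y i 2))" if "i \<in> {1..4}" for i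
  proof -
    have "y i 1 \<noteq> 0 \<and> f (y i 1) = 0" "y i 2 \<noteq> 0 \<and> f (y i 2) = 0"
      using sing[OF that] by simp_all
    with pairs[OF that] show ?thesis
      using on_common_line_reflection[OF fp] by (elim disjE) simp_all
  qed
  show ?thesis
    unfolding centric_cube_wrt_def
    by (intro conjI ballI impI center inj lines) (simp_all add: points collinear)
qed

lemma centric_cube_wrt_center_nonsingular:
  assumes "centric_cube_wrt f (proj_pt p) x"
  shows "f p \<noteq> 0"
proof -
  have "proj_pt p \<in> proj_points" "proj_pt p \<notin> Qpts f"
    using centric_cube_wrtD(1,2)[OF assms] .
  then show ?thesis
    by (simp add: proj_pt_in_proj_points_iff Qpts_proj_pt_iff)
qed

lemma centric_cube_wrt_partner:
  assumes cube: "centric_cube_wrt f (proj_pt p) x"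
    and i: "i \<in> {1..4}" and a: "a \<in> {1..2}" and u: "x i a = proj_pt u"
  shows "x i (3 - a) = proj_pt (reflection p u)"
proof -
  note a' = other_side_mem[OF a]
  note fp = centric_cube_wrt_center_nonsingular[OF cube]
  have "proj_pt u \<in> Qpts f" "\<not> perp f (proj_pt p) (proj_pt u)"
    using centric_cube_wrtD(4,5)[OF cube i a] u by simp_all
  then have u': "u \<noteq> 0" "f u = 0" "B u p \<noteq> 0"
    by (simp_all add: Qpts_proj_pt_iff perp_proj_pt_iff polar_commute[of p])
  have "x i (3 - a) \<in> Qpts f"
    using centric_cube_wrtD(4)[OF cube i a'(1)] .
  then obtain v where v: "v \<noteq> 0" "f v = 0" "x i (3 - a) = proj_pt v"
    by (rule QptsE)
  have "x i (3 - a) \<noteq> x i a"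
  proof
    assume "x i (3 - a) = x i a"
    moreover note centric_cube_wrtD(3)[OF cube]
    ultimately have "(i, 3 - a) = (i, a)"
      using i a a' by (auto dest: inj_onD[where x = "(i, 3 - a)" and y = "(i, a)"])
    with a' show False by simp
  qed
  with u v have ne: "proj_pt v \<noteq> proj_pt u"
    by simp
  obtain L where L: "vec.subspace L" "vec.dim L = 2" "proj_pt p \<subseteq> L" "x i 1 \<subseteq> L" "x i 2 \<subseteq> L"
    using centric_cube_wrtD(7)[OF cube i] unfolding on_common_line_def by blast
  have "x i c \<subseteq> L" if "c \<in> {1..2}" for c
  proof -
    have "c = 1 \<or> c = 2"
      using that by auto
    with L show ?thesis
      by auto
  qed
  then have "proj_pt u \<subseteq> L" "proj_pt v \<subseteq> L"
    using a a' u v by auto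
  with L v u' fp ne show ?thesis
    using singular_point_on_line_eq_reflection by (simp add: v(3))
qed

lemma centric_cube_wrt_collinear_partner:
  assumes cube: "centric_cube_wrt f P x"
    and ij: "i \<in> {1..4}" "j \<in> {1..4}" "i \<noteq> j" and ab: "a \<in> {1..2}" "b \<in> {1..2}"
    and "\<not> collinearQ f (x i a) (x j b)"
  shows "collinearQ f (x i a) (x j (3 - b))"
proof -
  have "collinearQ f (x i a) (x j c) \<longleftrightarrow> a \<noteq> c" if "c \<in> {1..2}" for c
    using centric_cube_wrtD(6)[OF cube ij(1) ab(1) ij(2) that] ij(3) by simp
  then show ?thesis
    using assms(7) ab other_side_mem[OF ab(2)] by metis
qed

end

locale quadrangle_frame = char2_quadratic_form +
  fixes a0 b0 c0 d0 :: "'a^6"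
  assumes singular_frame: "f a0 = 0" "f b0 = 0" "f c0 = 0" "f d0 = 0"
    and polar_frame: "B a0 b0 = 0" "B b0 c0 = 0" "B c0 d0 = 0" "B d0 a0 = 0" "B a0 c0 = 1" "B b0 d0 = 1"
begin

lemma polar_frame_commute: "B b0 a0 = 0" "B c0 b0 = 0" "B d0 c0 = 0" "B a0 d0 = 0" "B c0 a0 = 1" "B d0 b0 = 1"
  using polar_frame by (simp_all add: polar_commute)

lemmas frame_simps [simp] = singular_frame polar_frame polar_frame_commute

lemma frame_nonzero [simp]: "a0 \<noteq> 0" "b0 \<noteq> 0" "c0 \<noteq> 0" "d0 \<noteq> 0"
  by (metis polar_frame(5,6) polar_zero_left polar_zero_right zero_neq_one)+

lemma is_quadrangle_frame: "is_quadrangle f (proj_pt a0) (proj_pt b0) (proj_pt c0) (proj_pt d0)"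
proof -
  have "distinct [proj_pt a0, proj_pt b0, proj_pt c0, proj_pt d0]"
    using proj_pt_neq_of_polar[of b0 c0 a0] proj_pt_neq_of_polar[of a0 a0 c0]
      proj_pt_neq_of_polar[of a0 b0 d0] proj_pt_neq_of_polar[of b0 a0 c0]
      proj_pt_neq_of_polar[of b0 b0 d0] proj_pt_neq_of_polar[of d0 a0 c0]
    by auto
  then show ?thesis
    unfolding is_quadrangle_def by (simp add: Qpts_proj_pt_iff perp_proj_pt_iff)
qed

definition frame_comb :: "'a \<Rightarrow> 'a \<Rightarrow> 'a \<Rightarrow> 'a \<Rightarrow> 'a^6" where
  "frame_comb x y z t = x *s a0 + y *s b0 + z *s c0 + t *s d0"

definition frame_perp :: "('a^6) set" where
  "frame_perp = {w. B w a0 = 0 \<and> B w b0 = 0 \<and> B w c0 = 0 \<and> B w d0 = 0}"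

lemma polar_frame_comb:
  "B (frame_comb x y z t) c0 = x" "B (frame_comb x y z t) d0 = y"
  "B (frame_comb x y z t) a0 = z" "B (frame_comb x y z t) b0 = t"
  unfolding frame_comb_def by (simp_all add: polar_add_left polar_scale_left)

lemma f_frame_comb: "f (frame_comb x y z t) = x * z + y * t"
  unfolding frame_comb_def by (simp add: f_add f_scale polar_linear algebra_simps)

lemma polar_frame_perp:
  assumes "w \<in> frame_perp"
  shows "B w a0 = 0" "B w b0 = 0" "B w c0 = 0" "B w d0 = 0"
    and "B a0 w = 0" "B b0 w = 0" "B c0 w = 0" "B d0 w = 0"
  using assms unfolding frame_perp_def by (simp_all add: polar_commute[of _ w])

lemma f_frame_comb_add:
  assumes "w \<in> frame_perp"
  shows "f (frame_comb x y z t + w) = x * z + y * t + f w"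
proof -
  have "B (frame_comb x y z t) w = 0"
    unfolding frame_comb_def using polar_frame_perp[OF assms] by (simp add: polar_add_left polar_scale_left)
  then show ?thesis
    by (simp add: f_add f_frame_comb)
qed

lemma polar_frame_comb_add:
  assumes "w \<in> frame_perp"
  shows "B a0 (frame_comb x y z t + w) = z" "B b0 (frame_comb x y z t + w) = t"
    "B c0 (frame_comb x y z t + w) = x" "B d0 (frame_comb x y z t + w) = y"
  using polar_frame_perp[OF assms] polar_frame_comb
  by (simp_all add: polar_add_right polar_commute[of _ "frame_comb x y z t"])

definition frame_proj :: "'a^6 \<Rightarrow> 'a^6" where
  "frame_proj v = v - frame_comb (B v c0) (B v d0) (B v a0) (B v b0)"

lemma frame_proj_in_frame_perp: "frame_proj v \<in> frame_perp"
  unfolding frame_perp_def frame_proj_def by (simp add: polar_diff_left polar_frame_comb)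

lemma frame_decomposition: "v = frame_comb (B v c0) (B v d0) (B v a0) (B v b0) + frame_proj v"
  unfolding frame_proj_def by simp

lemma frame_decomposition_unique:
  assumes "w \<in> frame_perp" "w' \<in> frame_perp" "frame_comb x y z t + w = frame_comb x' y' z' t' + w'"
  shows "x = x' \<and> y = y' \<and> z = z' \<and> t = t' \<and> w = w'"
proof -
  have "B (frame_comb x y z t + w) u = B (frame_comb x' y' z' t' + w') u" for u
    using assms(3) by simp
  from this[of c0] this[of d0] this[of a0] this[of b0] have "x = x' \<and> y = y' \<and> z = z' \<and> t = t'"
    using polar_frame_perp[OF assms(1)] polar_frame_perp[OF assms(2)]
    by (simp add: polar_add_left polar_frame_comb)
  with assms(3) show ?thesis
    by simp
qed

lemma independent_frame_perp:
  assumes "w \<in> frame_perp" "w \<noteq> 0"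
  shows "vec.independent {a0, b0, w}"
proof -
  note Bw = polar_frame_perp[OF assms(1)]
  have "b0 \<notin> vec.span {w}"
  proof
    assume "b0 \<in> vec.span {w}"
    then obtain t where "b0 = t *s w"
      unfolding vec.span_singleton by auto
    then have "B b0 d0 = t * B w d0"
      by (simp add: polar_scale_left)
    with Bw show False by simp
  qed
  moreover have "a0 \<notin> vec.span {b0, w}"
  proof
    assume "a0 \<in> vec.span {b0, w}"
    then obtain k where "a0 - k *s b0 \<in> vec.span {w}"
      using vec.span_breakdown_eq by blast
    then obtain t where "a0 - k *s b0 = t *s w"
      unfolding vec.span_singleton by auto
    then have "B (a0 - k *s b0) c0 = B (t *s w) c0"
      by simp
    with Bw show False
      by (simp add: polar_diff_left polar_scale_left)
  qed
  ultimately show ?thesis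
    using assms(2) by (simp add: vec.independent_insert)
qed

text \<open>If \<open>w\<close> were singular, \<open>{a0, b0, w}\<close> would span a totally singular plane, exceeding the Witt index.\<close>
lemma frame_perp_anisotropic:
  assumes witt: "witt_index f 2" and w: "w \<in> frame_perp" "w \<noteq> 0"
  shows "f w \<noteq> 0"
proof
  assume fw: "f w = 0"
  note Bw = polar_frame_perp[OF w(1)]
  let ?S = "vec.span {a0, b0, w}"
  have "totally_singular f ?S"
    unfolding totally_singular_def
  proof (intro conjI ballI)
    show "vec.subspace ?S" by simp
    fix v assume "v \<in> ?S"
    then obtain k where "v - k *s a0 \<in> vec.span {b0, w}"
      using vec.span_breakdown_eq by blast
    then obtain k' where "v - k *s a0 - k' *s b0 \<in> vec.span {w}"
      using vec.span_breakdown_eq by blast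
    then obtain t where "v - k *s a0 - k' *s b0 = t *s w"
      unfolding vec.span_singleton by auto
    then have v: "v = k *s a0 + k' *s b0 + t *s w"
      by (simp add: algebra_simps)
    show "f v = 0"
      unfolding v using Bw fw by (simp add: f_add f_scale polar_linear)
  qed
  then have "vec.dim ?S \<le> 2"
    using witt unfolding witt_index_def by blast
  moreover have "a0 \<noteq> b0" "a0 \<noteq> w" "b0 \<noteq> w"
    using Bw polar_frame by (metis zero_neq_one)+
  then have "vec.dim ?S = 3"
    using vec.dim_span_eq_card_independent[OF independent_frame_perp[OF w]] by simp
  ultimately show False
    by simp
qed

definition vertex :: "nat \<Rightarrow> 'a^6" where
  "vertex i = (if i = 1 then a0 else if i = 2 then b0 else if i = 3 then c0 else d0)"

text \<open>The normalised (\<open>B a0 p = 1\<close>) centres of the centric cubes having \<open>a0, b0, c0, d0\<close> as a face: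
  \<open>p\<close> is non-perpendicular to the vertices, and the symmetry in \<open>p\<close> maps each vertex to a point
  perpendicular to the opposite vertex.\<close>
definition centers :: "('a^6) set" where
  "centers = {p. B a0 p = 1 \<and> B b0 p \<noteq> 0 \<and> B c0 p \<noteq> 0 \<and> B d0 p \<noteq> 0
     \<and> f p = B c0 p \<and> f p = B b0 p * B d0 p}"

lemma centersD:
  assumes "p \<in> centers"
  shows "B a0 p = 1" "B b0 p \<noteq> 0" "B c0 p \<noteq> 0" "B d0 p \<noteq> 0"
    and "f p = B c0 p" "f p = B b0 p * B d0 p" "f p \<noteq> 0"
  using assms unfolding centers_def by auto

lemma centersI:
  assumes "f p \<noteq> 0" "B a0 p = 1" "B b0 p \<noteq> 0" "B c0 p \<noteq> 0" "B d0 p \<noteq> 0"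
    and "B a0 (reflection p c0) = 0" "B b0 (reflection p d0) = 0"
  shows "p \<in> centers"
proof -
  have "B c0 p / f p = 1" "B d0 p * B b0 p / f p = 1"
    using assms(2,6,7) by (simp_all add: polar_reflection_right add_eq_0_iff_eq)
  with assms(1-5) show ?thesis
    unfolding centers_def by (simp add: field_simps)
qed

definition cube_vec :: "'a^6 \<Rightarrow> nat \<Rightarrow> nat \<Rightarrow> 'a^6" where
  "cube_vec p i a = (if a = face_side i then vertex i else reflection p (vertex i))"

definition cube_of_center :: "'a^6 \<Rightarrow> ('a^6) set set" where
  "cube_of_center p = cube_points (\<lambda>i a. proj_pt (cube_vec p i a))"

lemma polar_cube_vec_eq_0_iff:
  assumes "p \<in> centers" "i \<in> {1..4}" "a \<in> {1..2}" "j \<in> {1..4}" "b \<in> {1..2}"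
  shows "B (cube_vec p i a) (cube_vec p j b) = 0 \<longleftrightarrow> (i = j \<and> a = b) \<or> (i \<noteq> j \<and> a \<noteq> b)"
proof -
  note c = centersD[OF assms(1)]
  have fp: "f p = B b0 p * B d0 p" and cp: "B c0 p = B b0 p * B d0 p"
    using c(5,6) by simp_all
  have "i = 1 \<or> i = 2 \<or> i = 3 \<or> i = 4" "j = 1 \<or> j = 2 \<or> j = 3 \<or> j = 4" "a = 1 \<or> a = 2" "b = 1 \<or> b = 2"
    using assms(2-5) by auto
  then show ?thesis
    using c(2,4)
    by (elim disjE) (simp_all add: cube_vec_def vertex_def face_side_def c(1) fp cp
        polar_reflection_left polar_reflection_right polar_reflection_reflection)
qed

lemma centric_cube_wrt_cube_vec:
  assumes p: "p \<in> centers"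
  shows "centric_cube_wrt f (proj_pt p) (\<lambda>i a. proj_pt (cube_vec p i a))"
proof (rule centric_cube_wrt_of_vectors)
  note c = centersD[OF p]
  show "f p \<noteq> 0"
    using c(7) .
  have vertex: "vertex i \<noteq> 0 \<and> f (vertex i) = 0 \<and> B (vertex i) p \<noteq> 0" for i
    using c by (simp add: vertex_def)
  show "cube_vec p i a \<noteq> 0 \<and> f (cube_vec p i a) = 0 \<and> B (cube_vec p i a) p \<noteq> 0" for i a
    using vertex[of i] c(7)
    by (simp add: cube_vec_def reflection_nonzero f_reflection polar_reflection_center)
  show "B (cube_vec p i a) (cube_vec p j b) = 0 \<longleftrightarrow> (i = j \<and> a = b) \<or> (i \<noteq> j \<and> a \<noteq> b)"
    if "i \<in> {1..4}" "a \<in> {1..2}" "j \<in> {1..4}" "b \<in> {1..2}" for i a j b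
    using polar_cube_vec_eq_0_iff[OF p that] .
  show "cube_vec p i 2 = reflection p (cube_vec p i 1) \<or> cube_vec p i 1 = reflection p (cube_vec p i 2)" for i
    by (simp add: cube_vec_def face_side_def)
qed

lemma cube_of_center_is_cube_with_face:
  assumes "p \<in> centers"
  shows "centric_cube f (cube_of_center p)"
    and "face_of_cube f {proj_pt a0, proj_pt b0, proj_pt c0, proj_pt d0} (cube_of_center p)"
proof -
  note cube = centric_cube_wrt_cube_vec[OF assms]
  then show "centric_cube f (cube_of_center p)"
    unfolding centric_cube_def cube_of_center_def by blast
  have "{1..4::nat} = {1, 2, 3, 4}"
    by auto
  then have "{proj_pt a0, proj_pt b0, proj_pt c0, proj_pt d0} =
      (\<lambda>i. proj_pt (cube_vec p i (face_side i))) ` {1..4}"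
    by (auto simp: cube_vec_def vertex_def)
  moreover have "quadrangle_set f {proj_pt a0, proj_pt b0, proj_pt c0, proj_pt d0}"
    unfolding quadrangle_set_def using is_quadrangle_frame by blast
  ultimately show "face_of_cube f {proj_pt a0, proj_pt b0, proj_pt c0, proj_pt d0} (cube_of_center p)"
    unfolding face_of_cube_def cube_of_center_def using cube face_side_mem(1) by blast
qed

lemma cube_of_center_eq_vertex_pairs:
  "cube_of_center p = (\<Union>g\<in>{a0, b0, c0, d0}. {proj_pt g, proj_pt (reflection p g)})"
proof -
  have "{1..4::nat} \<times> {1..2::nat} = {(1, 1), (1, 2), (2, 1), (2, 2), (3, 1), (3, 2), (4, 1), (4, 2)}"
    by auto
  then show ?thesis
    unfolding cube_of_center_def cube_points_def
    by (auto simp: cube_vec_def vertex_def face_side_def)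
qed

context
  fixes p :: "'a^6" and x :: "nat \<Rightarrow> nat \<Rightarrow> ('a^6) set" and s :: "nat \<Rightarrow> nat"
  assumes cube: "centric_cube_wrt f (proj_pt p) x"
    and side: "\<And>i. i \<in> {1..4} \<Longrightarrow> s i \<in> {1..2}"
    and face: "{proj_pt a0, proj_pt b0, proj_pt c0, proj_pt d0} = (\<lambda>i. x i (s i)) ` {1..4}"
begin

lemma face_vertex_index:
  assumes "g \<in> {a0, b0, c0, d0}"
  obtains i where "i \<in> {1..4}" "x i (s i) = proj_pt g"
proof -
  have "proj_pt g \<in> (\<lambda>i. x i (s i)) ` {1..4}"
    using assms face by blast
  then show thesis
    using that by auto
qed

lemma polar_face_vertex_center:
  assumes "g \<in> {a0, b0, c0, d0}"
  shows "B g p \<noteq> 0"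
proof -
  obtain i where i: "i \<in> {1..4}" "x i (s i) = proj_pt g"
    using face_vertex_index[OF assms] .
  then have "\<not> perp f (proj_pt p) (proj_pt g)"
    using centric_cube_wrtD(5)[OF cube i(1) side[OF i(1)]] by simp
  then show ?thesis
    by (simp add: perp_proj_pt_iff polar_commute[of p])
qed

lemma polar_face_vertex_reflection:
  assumes g: "g \<in> {a0, b0, c0, d0}" and h: "h \<in> {a0, b0, c0, d0}" and gh: "B g h \<noteq> 0"
  shows "B g (reflection p h) = 0"
proof -
  obtain i where i: "i \<in> {1..4}" "x i (s i) = proj_pt g"
    using face_vertex_index[OF g] .
  obtain j where j: "j \<in> {1..4}" "x j (s j) = proj_pt h"
    using face_vertex_index[OF h] .
  have "proj_pt g \<noteq> proj_pt h"
    using proj_pt_neq_of_polar[of g g h] gh by (simp add: polar_commute[of h])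
  with i j have "i \<noteq> j"
    by auto
  moreover have "\<not> collinearQ f (x i (s i)) (x j (s j))"
    using i j gh by (simp add: collinearQ_proj_pt_iff)
  ultimately have "collinearQ f (x i (s i)) (x j (3 - s j))"
    using centric_cube_wrt_collinear_partner[OF cube i(1) j(1)] side i(1) j(1) by blast
  moreover have "x j (3 - s j) = proj_pt (reflection p h)"
    using centric_cube_wrt_partner[OF cube j(1) side[OF j(1)] j(2)] .
  ultimately show ?thesis
    using i by (simp add: collinearQ_proj_pt_iff)
qed

lemma face_center_in_centers:
  assumes "B a0 p = 1"
  shows "p \<in> centers"
proof (rule centersI)
  show "f p \<noteq> 0"
    using centric_cube_wrt_center_nonsingular[OF cube] .
  show "B a0 (reflection p c0) = 0" "B b0 (reflection p d0) = 0"
    by (simp_all add: polar_face_vertex_reflection)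
qed (simp_all add: assms polar_face_vertex_center)

lemma cube_points_eq_vertex_pairs:
  "cube_points x = (\<Union>g\<in>{a0, b0, c0, d0}. {proj_pt g, proj_pt (reflection p g)})"
proof
  show "cube_points x \<subseteq> (\<Union>g\<in>{a0, b0, c0, d0}. {proj_pt g, proj_pt (reflection p g)})"
  proof
    fix X assume "X \<in> cube_points x"
    then obtain i c where i: "i \<in> {1..4}" and c: "c \<in> {1..2}" and X: "X = x i c"
      unfolding cube_points_def by auto
    have "x i (s i) \<in> {proj_pt a0, proj_pt b0, proj_pt c0, proj_pt d0}"
      using face i by blast
    then obtain g where g: "g \<in> {a0, b0, c0, d0}" "x i (s i) = proj_pt g"
      by blast
    have "c = s i \<or> c = 3 - s i"
      using c side[OF i] by auto
    then have "X = proj_pt g \<or> X = proj_pt (reflection p g)"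
      using X g(2) centric_cube_wrt_partner[OF cube i side[OF i] g(2)] by auto
    with g(1) show "X \<in> (\<Union>g\<in>{a0, b0, c0, d0}. {proj_pt g, proj_pt (reflection p g)})"
      by blast
  qed
  show "(\<Union>g\<in>{a0, b0, c0, d0}. {proj_pt g, proj_pt (reflection p g)}) \<subseteq> cube_points x"
  proof clarify
    fix g X assume g: "g \<in> {a0, b0, c0, d0}" and X: "X \<in> {proj_pt g, proj_pt (reflection p g)}"
    obtain i where i: "i \<in> {1..4}" "x i (s i) = proj_pt g"
      using face_vertex_index[OF g] .
    have "x i (3 - s i) \<in> cube_points x"
      unfolding cube_points_def using i(1) other_side_mem(1)[OF side[OF i(1)]]
      by (intro image_eqI[where x = "(i, 3 - s i)"]) auto
    moreover have "x i (s i) \<in> cube_points x"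
      unfolding cube_points_def using i(1) side[OF i(1)] by (intro image_eqI[where x = "(i, s i)"]) auto
    ultimately show "X \<in> cube_points x"
      using X centric_cube_wrt_partner[OF cube i(1) side[OF i(1)] i(2)] i(2) by auto
  qed
qed

end

lemma face_of_cube_imp_cube_of_center:
  assumes "face_of_cube f {proj_pt a0, proj_pt b0, proj_pt c0, proj_pt d0} C"
  shows "C \<in> cube_of_center ` centers"
proof -
  obtain P x s where cube: "centric_cube_wrt f P x" and C: "C = cube_points x"
    and side: "\<forall>i\<in>{1..4}. s i \<in> {1..2}"
    and face: "{proj_pt a0, proj_pt b0, proj_pt c0, proj_pt d0} = (\<lambda>i. x i (s i)) ` {1..4}"
    using assms unfolding face_of_cube_def by (elim exE conjE) (rule that; assumption)
  from side have side': "\<And>i. i \<in> {1..4} \<Longrightarrow> s i \<in> {1..2}"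
    by blast
  obtain p1 where P: "P = proj_pt p1"
    using centric_cube_wrtD(1)[OF cube] proj_points_iff by blast
  have "B a0 p1 \<noteq> 0"
    using polar_face_vertex_center[OF cube[unfolded P] side' face] by simp
  define p where "p = (1 / B a0 p1) *s p1"
  have "P = proj_pt p"
    unfolding p_def P using \<open>B a0 p1 \<noteq> 0\<close> by (simp add: proj_pt_scale)
  with cube have cube': "centric_cube_wrt f (proj_pt p) x"
    by simp
  have "B a0 p = 1"
    unfolding p_def using \<open>B a0 p1 \<noteq> 0\<close> by (simp add: polar_scale_right)
  then have "p \<in> centers"
    using face_center_in_centers[OF cube' side' face] by blast
  moreover have "C = cube_of_center p"
    using cube_points_eq_vertex_pairs[OF cube' side' face] by (simp add: C cube_of_center_eq_vertex_pairs)
  ultimately show ?thesis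
    by blast
qed

lemma reflection_vertex_eq_of_mem_cube_of_center:
  assumes p: "p \<in> centers" and q: "q \<in> centers" and i: "i \<in> {1..4}"
    and mem: "proj_pt (reflection q (vertex i)) \<in> cube_of_center p"
  shows "proj_pt (reflection q (vertex i)) = proj_pt (reflection p (vertex i))"
proof -
  obtain j b where j: "j \<in> {1..4}" and b: "b \<in> {1..2}"
    and eq: "proj_pt (reflection q (vertex i)) = proj_pt (cube_vec p j b)"
    using mem unfolding cube_of_center_def cube_points_def by auto
  have vertex: "cube_vec r k (face_side k) = vertex k" for r k
    by (simp add: cube_vec_def)
  have reflection: "cube_vec r i (3 - face_side i) = reflection r (vertex i)" for r
    using face_side_mem(3) by (simp add: cube_vec_def)
  have "((i = k \<and> 3 - face_side i = face_side k) \<or> (i \<noteq> k \<and> 3 - face_side i \<noteq> face_side k)) \<longleftrightarrow>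
      ((j = k \<and> b = face_side k) \<or> (j \<noteq> k \<and> b \<noteq> face_side k))" if k: "k \<in> {1..4}" for k
  proof -
    have "B (reflection q (vertex i)) (vertex k) = 0 \<longleftrightarrow> B (cube_vec p j b) (vertex k) = 0"
      using polar_eq_0_iff_of_proj_pt_eq[OF eq] .
    then show ?thesis
      using polar_cube_vec_eq_0_iff[OF q i face_side_mem(2)[of i] k face_side_mem(1)[of k]]
        polar_cube_vec_eq_0_iff[OF p j b k face_side_mem(1)[of k]]
      by (simp only: vertex reflection)
  qed
  then have "(i, 3 - face_side i) = (j, b)"
    using cube_index_eq_of_face_pattern[OF i face_side_mem(2) j b] by blast
  then have "cube_vec p j b = reflection p (vertex i)"
    using reflection[of p] by auto
  with eq show ?thesis
    by simp
qed

lemma centers_eq_add_of_reflection_eq: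
  assumes p: "p \<in> centers" and q: "q \<in> centers" and g: "g \<in> {a0, b0}"
    and eq: "proj_pt (reflection q g) = proj_pt (reflection p g)"
  shows "\<exists>\<mu>. q = p + \<mu> *s g"
proof -
  note cp = centersD[OF p] and cq = centersD[OF q]
  have gp: "B g p \<noteq> 0" and gq: "B g q \<noteq> 0" and ga: "B g a0 = 0"
    using g cp cq by auto
  obtain r where r: "reflection q g = r *s reflection p g"
    using proj_pt_eq_imp_scale[OF eq] ..
  let ?kq = "B g q / f q" and ?kp = "B g p / f p"
  have e: "g + ?kq *s q = r *s g + (r * ?kp) *s p"
    using r unfolding reflection_def by (simp add: vector_add_ldistrib)
  then have "B (g + ?kq *s q) a0 = B (r *s g + (r * ?kp) *s p) a0"
    by simp
  moreover have "B p a0 = 1" "B q a0 = 1"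
    using cp(1) cq(1) by (simp_all add: polar_commute[of a0])
  ultimately have kq: "?kq = r * ?kp"
    using ga by (simp add: polar_add_left polar_scale_left)
  have "?kq \<noteq> 0"
    using gq cq(7) by simp
  moreover have "?kq *s q = ?kq *s p + (r - 1) *s g"
    using e kq by (simp add: algebra_simps)
  ultimately have "q = p + ((r - 1) / ?kq) *s g"
    by (simp add: vec_eq_iff field_simps)
  then show ?thesis ..
qed

lemma inj_on_cube_of_center: "inj_on cube_of_center centers"
proof (rule inj_onI)
  fix p q assume p: "p \<in> centers" and q: "q \<in> centers" and eq: "cube_of_center p = cube_of_center q"
  have "proj_pt (reflection q (vertex i)) = proj_pt (reflection p (vertex i))" if i: "i \<in> {1..4}" for i
  proof (rule reflection_vertex_eq_of_mem_cube_of_center[OF p q i])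
    have "proj_pt (cube_vec q i (3 - face_side i)) \<in> cube_of_center q"
      unfolding cube_of_center_def cube_points_def using i face_side_mem(2)[of i]
      by (auto intro!: image_eqI[where x = "(i, 3 - face_side i)"])
    then show "proj_pt (reflection q (vertex i)) \<in> cube_of_center p"
      using eq face_side_mem(3) by (simp add: cube_vec_def)
  qed
  from this[of 1] this[of 2] have "proj_pt (reflection q a0) = proj_pt (reflection p a0)"
    "proj_pt (reflection q b0) = proj_pt (reflection p b0)"
    by (simp_all add: vertex_def)
  then obtain \<mu> \<nu> where "q = p + \<mu> *s a0" "q = p + \<nu> *s b0"
    using centers_eq_add_of_reflection_eq[OF p q] by blast
  then have "B (\<mu> *s a0) c0 = B (\<nu> *s b0) c0"
    by simp
  then have "\<mu> = 0"
    by (simp add: polar_scale_left)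
  with \<open>q = p + \<mu> *s a0\<close> show "p = q"
    by simp
qed

lemma cubes_with_frame_face:
  "{C. centric_cube f C \<and> face_of_cube f {proj_pt a0, proj_pt b0, proj_pt c0, proj_pt d0} C} =
     cube_of_center ` centers"
proof
  show "{C. centric_cube f C \<and> face_of_cube f {proj_pt a0, proj_pt b0, proj_pt c0, proj_pt d0} C} \<subseteq>
      cube_of_center ` centers"
    using face_of_cube_imp_cube_of_center by blast
  show "cube_of_center ` centers \<subseteq>
      {C. centric_cube f C \<and> face_of_cube f {proj_pt a0, proj_pt b0, proj_pt c0, proj_pt d0} C}"
    using cube_of_center_is_cube_with_face by blast
qed

definition center_params :: "('a \<times> 'a \<times> ('a^6)) set" where
  "center_params = (SIGMA \<alpha>:{\<alpha>. \<alpha> \<noteq> 0}. {\<beta>. \<beta> \<noteq> 0} \<times> {w \<in> frame_perp. f w = \<alpha>})"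

definition center_of_params :: "'a \<times> 'a \<times> ('a^6) \<Rightarrow> 'a^6" where
  "center_of_params = (\<lambda>(\<alpha>, \<beta>, w). frame_comb \<alpha> \<beta> 1 (\<alpha> / \<beta>) + w)"

lemma center_of_params_in_centers:
  assumes "t \<in> center_params"
  shows "center_of_params t \<in> centers"
proof -
  obtain \<alpha> \<beta> w where h: "\<alpha> \<noteq> 0" "\<beta> \<noteq> 0" "w \<in> frame_perp" "f w = \<alpha>"
    and t: "center_of_params t = frame_comb \<alpha> \<beta> 1 (\<alpha> / \<beta>) + w"
    using assms unfolding center_params_def center_of_params_def by auto
  have "f (center_of_params t) = \<alpha>"
    unfolding t using f_frame_comb_add[OF h(3)] h by simp
  then show ?thesis
    unfolding centers_def using polar_frame_comb_add[OF h(3)] h t by simp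
qed

lemma centers_subset_image_center_of_params: "centers \<subseteq> center_of_params ` center_params"
proof
  fix p assume p: "p \<in> centers"
  note c = centersD[OF p]
  let ?\<alpha> = "B c0 p" and ?\<beta> = "B d0 p" and ?w = "frame_proj p"
  have "B b0 p = ?\<alpha> / ?\<beta>"
    using c by (simp add: field_simps)
  then have p_eq: "p = frame_comb ?\<alpha> ?\<beta> 1 (?\<alpha> / ?\<beta>) + ?w"
    using frame_decomposition[of p] c(1) by (simp add: polar_commute[of p])
  then have "f p = ?\<alpha> + ?\<alpha> + f ?w"
    using f_frame_comb_add[OF frame_proj_in_frame_perp, of ?\<alpha> ?\<beta> 1 "?\<alpha> / ?\<beta>" p] c(4) by simp
  then have "f ?w = ?\<alpha>"
    using c(5) by simp
  then have "(?\<alpha>, ?\<beta>, ?w) \<in> center_params"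
    unfolding center_params_def using c frame_proj_in_frame_perp by simp
  moreover have "center_of_params (?\<alpha>, ?\<beta>, ?w) = p"
    unfolding center_of_params_def using p_eq by simp
  ultimately show "p \<in> center_of_params ` center_params"
    by (metis image_eqI)
qed

lemma bij_betw_center_of_params: "bij_betw center_of_params center_params centers"
proof (rule bij_betw_imageI)
  show "inj_on center_of_params center_params"
    unfolding inj_on_def center_of_params_def center_params_def
    using frame_decomposition_unique by fastforce
  show "center_of_params ` center_params = centers"
    using center_of_params_in_centers centers_subset_image_center_of_params by blast
qed

end

locale anisotropic_quadrangle_frame = quadrangle_frame f a0 b0 c0 d0
  for f :: "'a::{finite,field}^6 \<Rightarrow> 'a" and a0 b0 c0 d0 +
  assumes anisotropic: "\<And>w. w \<in> frame_perp \<Longrightarrow> w \<noteq> 0 \<Longrightarrow> f w \<noteq> 0"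
begin

lemma card_nonzero: "card {\<alpha>::'a. \<alpha> \<noteq> 0} = CARD('a) - 1"
proof -
  have "{\<alpha>::'a. \<alpha> \<noteq> 0} = UNIV - {0}"
    by auto
  then show ?thesis
    by (simp add: card_Diff_subset)
qed

lemma card_frame_perp: "card frame_perp = CARD('a) ^ 2"
proof -
  let ?G = "\<lambda>((x, y, z, t), w). frame_comb x y z t + w"
  let ?D = "(UNIV :: ('a \<times> 'a \<times> 'a \<times> 'a) set) \<times> frame_perp"
  have "inj_on ?G ?D"
    unfolding inj_on_def using frame_decomposition_unique by fastforce
  moreover have "?G ` ?D = UNIV"
  proof -
    have "v \<in> ?G ` ?D" for v
      using frame_decomposition[of v] frame_proj_in_frame_perp[of v]
      by (auto intro!: image_eqI[where x = "((B v c0, B v d0, B v a0, B v b0), frame_proj v)"])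
    then show ?thesis by blast
  qed
  ultimately have "CARD('a^6) = card ?D"
    using card_image by fastforce
  also have "\<dots> = CARD('a) ^ 4 * card frame_perp"
    unfolding card_cartesian_product by (simp add: card_prod power4_eq_xxxx)
  finally have "CARD('a) ^ 4 * card frame_perp = CARD('a) ^ 4 * CARD('a) ^ 2"
    by (simp flip: power_add)
  moreover have "CARD('a) ^ 4 \<noteq> 0"
    by simp
  ultimately show ?thesis
    using mult_left_cancel by blast
qed

lemma square_surj: "\<exists>r::'a. r * r = \<alpha>"
proof -
  have "inj (\<lambda>r::'a. r * r)"
  proof (rule injI)
    fix r s :: 'a
    assume "r * r = s * s"
    then have "(r + s) * (r + s) = 0"
      by (simp add: algebra_simps add_eq_0_iff_eq)
    then show "r = s"
      by (simp add: add_eq_0_iff_eq)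
  qed
  then have "surj (\<lambda>r::'a. r * r)"
    by (rule finite_UNIV_inj_surj[OF finite])
  then show ?thesis
    by (metis surjD)
qed

lemma card_frame_perp_level_eq:
  assumes "\<alpha> \<noteq> 0"
  shows "card {w \<in> frame_perp. f w = \<alpha>} = card {w \<in> frame_perp. f w = 1}"
proof -
  obtain r where r: "r * r = \<alpha>"
    using square_surj by blast
  with assms have "r \<noteq> 0"
    by auto
  have scale: "s *s w \<in> frame_perp" if "w \<in> frame_perp" for s w
    using that unfolding frame_perp_def by (simp add: polar_scale_left)
  have "(\<lambda>w. r *s w) ` {w \<in> frame_perp. f w = 1} = {w \<in> frame_perp. f w = \<alpha>}"
  proof
    show "(\<lambda>w. r *s w) ` {w \<in> frame_perp. f w = 1} \<subseteq> {w \<in> frame_perp. f w = \<alpha>}"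
      using r scale by (auto simp: f_scale)
    show "{w \<in> frame_perp. f w = \<alpha>} \<subseteq> (\<lambda>w. r *s w) ` {w \<in> frame_perp. f w = 1}"
    proof
      fix w assume w: "w \<in> {w \<in> frame_perp. f w = \<alpha>}"
      then have "(1 / r) *s w \<in> {w \<in> frame_perp. f w = 1}"
        using r \<open>r \<noteq> 0\<close> assms scale by (simp add: f_scale field_simps)
      moreover have "w = r *s ((1 / r) *s w)"
        using \<open>r \<noteq> 0\<close> by simp
      ultimately show "w \<in> (\<lambda>w. r *s w) ` {w \<in> frame_perp. f w = 1}"
        by blast
    qed
  qed
  moreover have "inj_on (\<lambda>w. r *s w) {w \<in> frame_perp. f w = 1}"
    using \<open>r \<noteq> 0\<close> by (auto simp: inj_on_def)
  then have "card ((\<lambda>w. r *s w) ` {w \<in> frame_perp. f w = 1}) = card {w \<in> frame_perp. f w = 1}"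
    by (rule card_image)
  ultimately show ?thesis
    by simp
qed

lemma card_frame_perp_level:
  assumes "\<alpha> \<noteq> 0"
  shows "card {w \<in> frame_perp. f w = \<alpha>} = CARD('a) + 1"
proof -
  let ?S = "\<lambda>\<alpha>. {w \<in> frame_perp. f w = \<alpha>}"
  have "2 \<le> CARD('a)"
    using card_mono[of UNIV "{0::'a, 1}"] by simp
  have "frame_perp - {0} = (\<Union>\<alpha>\<in>{\<alpha>::'a. \<alpha> \<noteq> 0}. ?S \<alpha>)"
  proof (intro equalityI subsetI)
    fix w assume "w \<in> frame_perp - {0}"
    then show "w \<in> (\<Union>\<alpha>\<in>{\<alpha>::'a. \<alpha> \<noteq> 0}. ?S \<alpha>)"
      using anisotropic by blast
  qed auto
  then have "card (frame_perp - {0}) = (\<Sum>\<alpha>\<in>{\<alpha>::'a. \<alpha> \<noteq> 0}. card (?S \<alpha>))"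
    by (simp only:) (rule card_UN_disjoint, auto)
  also have "\<dots> = (\<Sum>\<alpha>\<in>{\<alpha>::'a. \<alpha> \<noteq> 0}. card (?S 1))"
    by (intro sum.cong refl) (rule card_frame_perp_level_eq, simp)
  also have "\<dots> = (CARD('a) - 1) * card (?S 1)"
    by (simp add: card_nonzero)
  finally have "(CARD('a) - 1) * card (?S 1) = card (frame_perp - {0})" ..
  also have "\<dots> = CARD('a) ^ 2 - 1"
    using card_frame_perp by (simp add: card_Diff_singleton frame_perp_def)
  also have "\<dots> = (CARD('a) - 1) * (CARD('a) + 1)"
    using \<open>2 \<le> CARD('a)\<close> by (simp add: power2_eq_square algebra_simps)
  finally have "(CARD('a) - 1) * card (?S 1) = (CARD('a) - 1) * (CARD('a) + 1)" .
  moreover have "CARD('a) - 1 \<noteq> 0"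
    using \<open>2 \<le> CARD('a)\<close> by simp
  ultimately have "card (?S 1) = CARD('a) + 1"
    using mult_left_cancel by blast
  then show ?thesis
    using card_frame_perp_level_eq[OF assms] by simp
qed

lemma card_centers: "card centers = (CARD('a) - 1) ^ 2 * (CARD('a) + 1)"
proof -
  have "card center_params = (\<Sum>\<alpha>\<in>{\<alpha>::'a. \<alpha> \<noteq> 0}. card ({\<beta>::'a. \<beta> \<noteq> 0} \<times> {w \<in> frame_perp. f w = \<alpha>}))"
    unfolding center_params_def by (rule card_SigmaI) auto
  also have "\<dots> = (\<Sum>\<alpha>\<in>{\<alpha>::'a. \<alpha> \<noteq> 0}. (CARD('a) - 1) * (CARD('a) + 1))"
    by (intro sum.cong refl) (simp add: card_cartesian_product card_nonzero card_frame_perp_level)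
  also have "\<dots> = (CARD('a) - 1) ^ 2 * (CARD('a) + 1)"
    by (simp only: sum_constant card_nonzero of_nat_id power2_eq_square mult.assoc)
  finally show ?thesis
    using bij_betw_same_card[OF bij_betw_center_of_params] by simp
qed

end

context char2_quadratic_form
begin

lemma is_quadrangleE:
  assumes "is_quadrangle f a b c d"
  obtains a0 b0 c0 d0 where "quadrangle_frame f a0 b0 c0 d0"
    and "a = proj_pt a0" "b = proj_pt b0" "c = proj_pt c0" "d = proj_pt d0"
proof -
  note q = assms[unfolded is_quadrangle_def]
  obtain a0 where a0: "a0 \<noteq> 0" "f a0 = 0" "a = proj_pt a0"
    using q QptsE by metis
  obtain b0 where b0: "b0 \<noteq> 0" "f b0 = 0" "b = proj_pt b0"
    using q QptsE by metis
  obtain c1 where c1: "c1 \<noteq> 0" "f c1 = 0" "c = proj_pt c1"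
    using q QptsE by metis
  obtain d1 where d1: "d1 \<noteq> 0" "f d1 = 0" "d = proj_pt d1"
    using q QptsE by metis
  have B: "B a0 b0 = 0" "B b0 c1 = 0" "B c1 d1 = 0" "B d1 a0 = 0" "B a0 c1 \<noteq> 0" "B b0 d1 \<noteq> 0"
    using q a0 b0 c1 d1 by (simp_all add: perp_proj_pt_iff)
  define c0 where "c0 = (1 / B a0 c1) *s c1"
  define d0 where "d0 = (1 / B b0 d1) *s d1"
  have "quadrangle_frame f a0 b0 c0 d0"
    by unfold_locales
      (use a0 b0 c1 d1 B in \<open>simp_all add: c0_def d0_def f_scale polar_scale_left polar_scale_right\<close>)
  moreover have "c = proj_pt c0" "d = proj_pt d0"
    unfolding c0_def d0_def using c1 d1 B by (simp_all add: proj_pt_scale)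
  ultimately show thesis
    using a0 b0 that by blast
qed

end

theorem corollary3p7:
  fixes f :: "'a::{finite, field}^6 \<Rightarrow> 'a" and n :: nat
    and a b c d :: "('a^6) set"
  assumes "CARD('a) = 2 ^ n"
    and "quadratic_form f" and "nondegenerate f" and "witt_index f 2"
    and "is_quadrangle f a b c d"
  shows "card {C. centric_cube f C \<and> face_of_cube f {a, b, c, d} C}
           = (CARD('a) - 1)^2 * (CARD('a) + 1)"
proof -
  interpret char2_quadratic_form f
    using assms(2) two_eq_zero_if_card_eq_power_of_two[OF assms(1)] by unfold_locales
  obtain a0 b0 c0 d0 where frame: "quadrangle_frame f a0 b0 c0 d0"
    and abcd: "a = proj_pt a0" "b = proj_pt b0" "c = proj_pt c0" "d = proj_pt d0"
    using assms(5) by (rule is_quadrangleE)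
  interpret quadrangle_frame f a0 b0 c0 d0
    by (rule frame)
  interpret anisotropic_quadrangle_frame f a0 b0 c0 d0
    by unfold_locales (rule frame_perp_anisotropic[OF assms(4)])
  show ?thesis
    unfolding abcd cubes_with_frame_face card_image[OF inj_on_cube_of_center] card_centers ..
qed

end
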